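(* Let $K$ be a flag simplicial complex, let $\succ$ be a hereditary ordering of $K$, and let $r$ be a positive integer. Suppose that for any two simplices $\sigma,\tau\in K$ with $\dim\sigma=\dim\tau=r$ and $\mu(\sigma)=\mu(\tau)$ we have $\sigma\cup\tau\in K$. Then $K$ collapses on a subcomplex of dimension less than $r$.
   Context: $K$ is a finite simplicial complex (family of subsets of a finite vertex set containing $\emptyset$, closed under subsets); $\dim\sigma=|\sigma|-1$. $K$ is flag if any set of vertices pairwise joined by edges of $K$ is a simplex of $K$. For a strict total ordering $\succ$ of $K$ and non-empty $\sigma$, $\mu(\sigma)$ is the $\succ$-largest facet (codimension-one face) of $\sigma$; $\succ$ is hereditary if $\sigma\succ\tau$ whenever $\dim\sigma>\dim\tau$, and $\sigma\succ\tau$ whenever $\mu(\sigma)\succ\mu(\tau)$. A pair of non-empty simplices $(\sigma,\tau)$ is a free pair if $\tau$ is a facet of $\sigma$ and $K\setminus\{\sigma,\tau\}$ is a simplicial complex; removing it is an elementary collapse; $K$ collapses on $L$ if $L$ is obtained by a finite sequence of elementary collapses. *)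

theory Defs
  imports Main
begin

definition simplicial_complex :: "'a set set \<Rightarrow> bool" where
  "simplicial_complex K \<longleftrightarrow> finite K \<and> (\<forall>\<sigma>\<in>K. finite \<sigma>) \<and> {} \<in> K \<and>
     (\<forall>\<sigma>\<in>K. \<forall>\<tau>. \<tau> \<subseteq> \<sigma> \<longrightarrow> \<tau> \<in> K)"

definition dim :: "'a set \<Rightarrow> int" where
  "dim \<sigma> = int (card \<sigma>) - 1"

definition flag_complex :: "'a set set \<Rightarrow> bool" where
  "flag_complex K \<longleftrightarrow> simplicial_complex K \<and>
     (\<forall>S. finite S \<longrightarrow> S \<subseteq> \<Union>K \<longrightarrow> (\<forall>v\<in>S. \<forall>w\<in>S. v \<noteq> w \<longrightarrow> {v, w} \<in> K) \<longrightarrow> S \<in> K)"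

definition facets :: "'a set \<Rightarrow> 'a set set" where
  "facets \<sigma> = {\<sigma> - {v} | v. v \<in> \<sigma>}"

text \<open>(a, b) in R means a is larger than b in the ordering. mu R sigma is the R-largest facet.\<close>
definition mu :: "('a set \<times> 'a set) set \<Rightarrow> 'a set \<Rightarrow> 'a set" where
  "mu R \<sigma> = (THE \<tau>. \<tau> \<in> facets \<sigma> \<and> (\<forall>\<tau>'\<in>facets \<sigma>. \<tau>' \<noteq> \<tau> \<longrightarrow> (\<tau>, \<tau>') \<in> R))"

definition strict_total_ordering :: "'a set set \<Rightarrow> ('a set \<times> 'a set) set \<Rightarrow> bool" where
  "strict_total_ordering K R \<longleftrightarrow> R \<subseteq> K \<times> K \<and> strict_linear_order_on K R"

definition hereditary_ordering :: "'a set set \<Rightarrow> ('a set \<times> 'a set) set \<Rightarrow> bool" where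
  "hereditary_ordering K R \<longleftrightarrow> strict_total_ordering K R \<and>
     (\<forall>\<sigma>\<in>K. \<forall>\<tau>\<in>K. dim \<sigma> > dim \<tau> \<longrightarrow> (\<sigma>, \<tau>) \<in> R) \<and>
     (\<forall>\<sigma>\<in>K. \<forall>\<tau>\<in>K. \<sigma> \<noteq> {} \<longrightarrow> \<tau> \<noteq> {} \<longrightarrow> (mu R \<sigma>, mu R \<tau>) \<in> R \<longrightarrow> (\<sigma>, \<tau>) \<in> R)"

definition free_pair :: "'a set set \<Rightarrow> 'a set \<Rightarrow> 'a set \<Rightarrow> bool" where
  "free_pair K \<sigma> \<tau> \<longleftrightarrow> \<sigma> \<in> K \<and> \<tau> \<in> K \<and> \<sigma> \<noteq> {} \<and> \<tau> \<noteq> {} \<and> \<tau> \<in> facets \<sigma> \<and>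
     simplicial_complex (K - {\<sigma>, \<tau>})"

definition elementary_collapse :: "'a set set \<Rightarrow> 'a set set \<Rightarrow> bool" where
  "elementary_collapse K L \<longleftrightarrow> (\<exists>\<sigma> \<tau>. free_pair K \<sigma> \<tau> \<and> L = K - {\<sigma>, \<tau>})"

definition collapses_on :: "'a set set \<Rightarrow> 'a set set \<Rightarrow> bool" where
  "collapses_on K L \<longleftrightarrow> elementary_collapse\<^sup>*\<^sup>* K L"

end

theory Submission
  imports Defs "HOL-Library.Disjoint_Sets" "HOL-Library.Product_Lexorder"
begin

(*
  For an r-vertex simplex \<rho>, call u an extension vertex if \<rho> is the mu-largest facet of
  \<rho> + u, and call the interval between \<rho> and \<rho> plus all its extension vertices the cell of \<rho>.
  Flagness and the joinability hypothesis make the top of every cell a simplex, and heredity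
  makes \<rho> the largest r-vertex face of every simplex in its cell; conversely each simplex with
  at least r vertices lies in the cell of its largest r-vertex face. So the cells partition the
  simplices with at least r vertices. Toggling one fixed extension vertex (the pivot) matches
  every cell that has extension vertices perfectly; what stays unmatched are simplices with at
  most r vertices. The matching is acyclic for the weight (rank of the cell's r-face, size of
  the coface), so removing the pairs by decreasing weight is a sequence of elementary collapses.
*)

definition greatest_in :: "('b \<times> 'b) set \<Rightarrow> 'b set \<Rightarrow> 'b \<Rightarrow> bool" where
  "greatest_in R S m \<longleftrightarrow> m \<in> S \<and> (\<forall>x\<in>S. x \<noteq> m \<longrightarrow> (m, x) \<in> R)"

lemma mu_eq_The_greatest_in: "mu R \<sigma> = (THE \<tau>. greatest_in R (facets \<sigma>) \<tau>)"
  by (simp add: mu_def greatest_in_def)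

lemma greatest_in_unique:
  assumes "strict_linear_order_on A R" "S \<subseteq> A" "greatest_in R S m" "greatest_in R S m'"
  shows "m = m'"
proof (rule ccontr)
  assume "m \<noteq> m'"
  with assms(3,4) have "(m, m') \<in> R" "(m', m) \<in> R"
    unfolding greatest_in_def by auto
  with assms(1) have "(m, m) \<in> R"
    unfolding strict_linear_order_on_def by (meson transE)
  with assms show False
    unfolding strict_linear_order_on_def irrefl_on_def greatest_in_def by blast
qed

lemma greatest_in_exists:
  assumes "strict_linear_order_on A R" "finite S" "S \<noteq> {}" "S \<subseteq> A"
  shows "\<exists>m. greatest_in R S m"
  using assms(2,3,4)
proof (induction S rule: finite_ne_induct)
  case (singleton x)
  then show ?case by (auto simp: greatest_in_def)
next
  case (insert x F)
  then obtain m where m: "m \<in> F" "\<forall>y\<in>F. y \<noteq> m \<longrightarrow> (m, y) \<in> R"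
    unfolding greatest_in_def by auto
  have "trans R" "total_on A R"
    using assms(1) unfolding strict_linear_order_on_def by auto
  show ?case
  proof (cases "(x, m) \<in> R")
    case True
    with m \<open>trans R\<close> have "greatest_in R (insert x F) x"
      unfolding greatest_in_def by (auto dest: transD)
    then show ?thesis ..
  next
    case False
    with m insert \<open>total_on A R\<close> have "greatest_in R (insert x F) m"
      unfolding greatest_in_def total_on_def by auto
    then show ?thesis ..
  qed
qed

lemma greatest_in_The:
  assumes "strict_linear_order_on A R" "S \<subseteq> A" "greatest_in R S m"
  shows "(THE m. greatest_in R S m) = m"
  using assms by (blast intro: the_equality greatest_in_unique)

lemma free_pair_if_unique_coface:
  assumes "simplicial_complex C" "\<sigma> \<in> C" "\<tau> \<in> facets \<sigma>" "\<tau> \<noteq> {}"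
    and "\<And>\<gamma>. \<gamma> \<in> C \<Longrightarrow> \<tau> \<subset> \<gamma> \<Longrightarrow> \<gamma> = \<sigma>"
  shows "free_pair C \<sigma> \<tau>"
proof -
  have "\<tau> \<subset> \<sigma>" using assms(3) unfolding facets_def by auto
  have "t \<in> C - {\<sigma>, \<tau>}" if "s \<in> C - {\<sigma>, \<tau>}" "t \<subseteq> s" for s t
  proof -
    have "t \<noteq> \<sigma>" using assms(5) that \<open>\<tau> \<subset> \<sigma>\<close> by blast
    moreover have "t \<noteq> \<tau>" using assms(5) that by blast
    ultimately show ?thesis using assms(1) that unfolding simplicial_complex_def by blast
  qed
  moreover have "finite (C - {\<sigma>, \<tau>})" "\<forall>s\<in>C - {\<sigma>, \<tau>}. finite s"
    using assms(1) unfolding simplicial_complex_def by auto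
  moreover have "{} \<in> C - {\<sigma>, \<tau>}"
    using assms(1,4) \<open>\<tau> \<subset> \<sigma>\<close> unfolding simplicial_complex_def by blast
  ultimately have "simplicial_complex (C - {\<sigma>, \<tau>})"
    unfolding simplicial_complex_def by blast
  with assms(2-4) \<open>\<tau> \<subset> \<sigma>\<close> show ?thesis
    unfolding free_pair_def using assms(1) unfolding simplicial_complex_def by blast
qed

lemma Union_pairs_remove:
  assumes "p \<in> M" "disjoint_family_on (\<lambda>q. {fst q, snd q}) M"
  shows "(\<Union>q\<in>M. {fst q, snd q}) - {fst p, snd p} = (\<Union>q\<in>M - {p}. {fst q, snd q})"
proof -
  have disjoint: "{fst p, snd p} \<inter> {fst q, snd q} = {}" if "q \<in> M - {p}" for q
    using disjoint_family_onD[OF assms(2) assms(1), of q] that by auto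
  have "(\<Union>q\<in>M. {fst q, snd q}) = (\<Union>q\<in>insert p (M - {p}). {fst q, snd q})"
    by (simp only: insert_Diff[OF assms(1)])
  also have "\<dots> = {fst p, snd p} \<union> (\<Union>q\<in>M - {p}. {fst q, snd q})"
    by (simp only: UN_insert)
  finally show ?thesis using disjoint by blast
qed

(* A pair of maximal weight is free: acyclicity leaves its facet no other coface. *)
lemma collapses_on_acyclic_matching:
  fixes h :: "'a set \<times> 'a set \<Rightarrow> 'b::linorder"
  assumes "finite M" "simplicial_complex C" "L \<subseteq> C"
    and "C - L = (\<Union>q\<in>M. {fst q, snd q})"
    and "disjoint_family_on (\<lambda>q. {fst q, snd q}) M"
    and "\<And>q. q \<in> M \<Longrightarrow> snd q \<in> facets (fst q)"
    and "\<And>q. q \<in> M \<Longrightarrow> snd q \<noteq> {}"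
    and "\<And>q \<gamma>. q \<in> M \<Longrightarrow> \<gamma> \<in> C \<Longrightarrow> snd q \<subset> \<gamma> \<Longrightarrow> \<gamma> \<noteq> fst q \<Longrightarrow>
           \<exists>q'\<in>M. \<gamma> \<in> {fst q', snd q'} \<and> h q < h q'"
  shows "collapses_on C L"
  using assms
proof (induction M arbitrary: C rule: finite_psubset_induct)
  case (psubset M)
  show ?case
  proof (cases "M = {}")
    case True
    with psubset.prems(2,3) have "C = L" by blast
    then show ?thesis by (simp add: collapses_on_def)
  next
    case False
    then have "Max (h ` M) \<in> h ` M" using psubset.hyps by simp
    then obtain p where p: "p \<in> M" "h p = Max (h ` M)" by auto
    obtain \<sigma> \<tau> where p_eq: "p = (\<sigma>, \<tau>)" by fastforce
    have \<tau>_facet: "\<tau> \<in> facets \<sigma>" "\<tau> \<noteq> {}"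
      using psubset.prems(5,6)[OF p(1)] p_eq by simp_all
    have \<sigma>\<tau>_removed: "\<sigma> \<in> C - L" "\<tau> \<in> C - L"
      using psubset.prems(3) p(1) p_eq by (auto intro!: bexI[of _ p])
    have "\<gamma> = \<sigma>" if \<gamma>: "\<gamma> \<in> C" "\<tau> \<subset> \<gamma>" for \<gamma>
    proof (rule ccontr)
      assume "\<gamma> \<noteq> \<sigma>"
      with \<gamma> p_eq have "snd p \<subset> \<gamma>" "\<gamma> \<noteq> fst p" by simp_all
      then obtain q where "q \<in> M" "h p < h q"
        using psubset.prems(7)[OF p(1) \<gamma>(1)] by blast
      moreover have "h q \<le> h p" if "q \<in> M" for q
        using p(2) psubset.hyps that by simp
      ultimately show False by (simp add: leD)
    qed
    then have free: "free_pair C \<sigma> \<tau>"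
      using free_pair_if_unique_coface psubset.prems(1) \<sigma>\<tau>_removed \<tau>_facet by blast
    have "collapses_on (C - {\<sigma>, \<tau>}) L"
    proof (rule psubset.IH)
      show "M - {p} \<subset> M" using p(1) by blast
      show "simplicial_complex (C - {\<sigma>, \<tau>})" using free unfolding free_pair_def by blast
      show "L \<subseteq> C - {\<sigma>, \<tau>}" using psubset.prems(2) \<sigma>\<tau>_removed by blast
      have "C - {\<sigma>, \<tau>} - L = (C - L) - {fst p, snd p}" using p_eq by auto
      then show "C - {\<sigma>, \<tau>} - L = (\<Union>q\<in>M - {p}. {fst q, snd q})"
        using Union_pairs_remove[OF p(1) psubset.prems(4)] psubset.prems(3) by simp
      show "disjoint_family_on (\<lambda>q. {fst q, snd q}) (M - {p})"
        using disjoint_family_on_mono[OF _ psubset.prems(4)] by blast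
      show "snd q \<in> facets (fst q)" "snd q \<noteq> {}" if "q \<in> M - {p}" for q
        using psubset.prems(5,6) that by simp_all
      show "\<exists>q'\<in>M - {p}. \<gamma> \<in> {fst q', snd q'} \<and> h q < h q'"
        if q\<gamma>: "q \<in> M - {p}" "\<gamma> \<in> C - {\<sigma>, \<tau>}" "snd q \<subset> \<gamma>" "\<gamma> \<noteq> fst q" for q \<gamma>
      proof -
        have "q \<in> M" "\<gamma> \<in> C" using q\<gamma>(1,2) by simp_all
        then obtain q' where "q' \<in> M" "\<gamma> \<in> {fst q', snd q'}" "h q < h q'"
          using psubset.prems(7) q\<gamma>(3,4) by blast
        moreover have "q' \<noteq> p" using calculation(2) q\<gamma>(2) p_eq by auto
        ultimately show ?thesis by blast
      qed
    qed
    moreover have "elementary_collapse C (C - {\<sigma>, \<tau>})"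
      using free unfolding elementary_collapse_def by blast
    ultimately show ?thesis
      unfolding collapses_on_def by (simp add: converse_rtranclp_into_rtranclp)
  qed
qed

lemma facet_subset: "\<tau> \<in> facets \<sigma> \<Longrightarrow> \<tau> \<subseteq> \<sigma>"
  unfolding facets_def by blast

lemma facets_insert: "u \<notin> \<rho> \<Longrightarrow> \<rho> \<in> facets (insert u \<rho>)"
  unfolding facets_def by (intro CollectI exI[of _ u]) auto

locale ordered_complex =
  fixes K :: "'a set set" and R :: "('a set \<times> 'a set) set"
  assumes complex: "simplicial_complex K"
    and order: "strict_total_ordering K R"
begin

lemma linear_order: "strict_linear_order_on K R"
  using order unfolding strict_total_ordering_def by blast

lemma order_in_K: "(\<sigma>, \<tau>) \<in> R \<Longrightarrow> \<sigma> \<in> K \<and> \<tau> \<in> K"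
  using order unfolding strict_total_ordering_def by blast

lemma order_trans: "(\<sigma>, \<tau>) \<in> R \<Longrightarrow> (\<tau>, \<upsilon>) \<in> R \<Longrightarrow> (\<sigma>, \<upsilon>) \<in> R"
  using linear_order unfolding strict_linear_order_on_def by (meson transE)

lemma order_irrefl: "(\<sigma>, \<sigma>) \<notin> R"
  using linear_order order_in_K unfolding strict_linear_order_on_def irrefl_on_def by blast

lemma order_asym: "(\<sigma>, \<tau>) \<in> R \<Longrightarrow> (\<tau>, \<sigma>) \<notin> R"
  using order_trans order_irrefl by blast

lemma order_total: "\<sigma> \<in> K \<Longrightarrow> \<tau> \<in> K \<Longrightarrow> \<sigma> \<noteq> \<tau> \<Longrightarrow> (\<sigma>, \<tau>) \<in> R \<or> (\<tau>, \<sigma>) \<in> R"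
  using linear_order unfolding strict_linear_order_on_def total_on_def by blast

lemma face_in_K: "\<sigma> \<in> K \<Longrightarrow> \<tau> \<subseteq> \<sigma> \<Longrightarrow> \<tau> \<in> K"
  using complex unfolding simplicial_complex_def by blast

lemma finite_simplex: "\<sigma> \<in> K \<Longrightarrow> finite \<sigma>"
  using complex unfolding simplicial_complex_def by blast

lemma finite_complex: "finite K"
  using complex unfolding simplicial_complex_def by blast

lemma finite_vertices: "finite (\<Union>K)"
  using finite_complex finite_simplex by blast

lemma mu_greatest:
  assumes "\<sigma> \<in> K" "\<sigma> \<noteq> {}"
  shows "greatest_in R (facets \<sigma>) (mu R \<sigma>)"
proof -
  have "facets \<sigma> = (\<lambda>v. \<sigma> - {v}) ` \<sigma>" unfolding facets_def by blast
  then have "finite (facets \<sigma>)" "facets \<sigma> \<noteq> {}"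
    using finite_simplex[OF assms(1)] assms(2) by simp_all
  moreover have "facets \<sigma> \<subseteq> K" using assms(1) face_in_K facet_subset by blast
  ultimately obtain \<tau> where "greatest_in R (facets \<sigma>) \<tau>"
    using greatest_in_exists[OF linear_order] by blast
  with \<open>facets \<sigma> \<subseteq> K\<close> show ?thesis
    unfolding mu_eq_The_greatest_in by (simp add: greatest_in_The[OF linear_order])
qed

lemma mu_eqI: "\<sigma> \<in> K \<Longrightarrow> greatest_in R (facets \<sigma>) \<tau> \<Longrightarrow> mu R \<sigma> = \<tau>"
  unfolding mu_eq_The_greatest_in
  by (metis face_in_K facet_subset greatest_in_The[OF linear_order] subsetI)

lemma mu_facet: "\<sigma> \<in> K \<Longrightarrow> \<sigma> \<noteq> {} \<Longrightarrow> mu R \<sigma> \<in> facets \<sigma>"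
  using mu_greatest unfolding greatest_in_def by blast

lemma mu_in_K: "\<sigma> \<in> K \<Longrightarrow> \<sigma> \<noteq> {} \<Longrightarrow> mu R \<sigma> \<in> K"
  by (meson face_in_K facet_subset mu_facet)

lemma mu_ge:
  assumes "\<sigma> \<in> K" "\<tau> \<in> facets \<sigma>"
  shows "mu R \<sigma> = \<tau> \<or> (mu R \<sigma>, \<tau>) \<in> R"
proof -
  have "\<sigma> \<noteq> {}" using assms(2) unfolding facets_def by blast
  with assms show ?thesis using mu_greatest unfolding greatest_in_def by blast
qed

definition rank :: "'a set \<Rightarrow> nat" where
  "rank \<sigma> = card {\<tau> \<in> K. (\<sigma>, \<tau>) \<in> R}"

lemma rank_less:
  assumes "(\<sigma>, \<tau>) \<in> R"
  shows "rank \<tau> < rank \<sigma>"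
proof -
  have "{\<upsilon> \<in> K. (\<tau>, \<upsilon>) \<in> R} \<subset> {\<upsilon> \<in> K. (\<sigma>, \<upsilon>) \<in> R}"
    using assms order_trans order_irrefl order_in_K by blast
  then show ?thesis
    unfolding rank_def using finite_complex by (simp add: psubset_card_mono)
qed

definition ext_vertices :: "'a set \<Rightarrow> 'a set" where
  "ext_vertices \<rho> = {u. u \<notin> \<rho> \<and> insert u \<rho> \<in> K \<and> mu R (insert u \<rho>) = \<rho>}"

definition cell :: "'a set \<Rightarrow> 'a set set" where
  "cell \<rho> = {\<alpha>. \<rho> \<subseteq> \<alpha> \<and> \<alpha> \<subseteq> \<rho> \<union> ext_vertices \<rho>}"

end

locale hereditary_complex = ordered_complex +
  assumes hereditary: "\<And>\<sigma> \<tau>. \<sigma> \<in> K \<Longrightarrow> \<tau> \<in> K \<Longrightarrow> \<sigma> \<noteq> {} \<Longrightarrow> \<tau> \<noteq> {} \<Longrightarrow>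
    (mu R \<sigma>, mu R \<tau>) \<in> R \<Longrightarrow> (\<sigma>, \<tau>) \<in> R"
begin

lemma mu_mono:
  assumes "(\<sigma>, \<tau>) \<in> R" "\<sigma> \<noteq> {}" "\<tau> \<noteq> {}"
  shows "mu R \<sigma> = mu R \<tau> \<or> (mu R \<sigma>, mu R \<tau>) \<in> R"
proof (rule ccontr)
  assume "\<not> ?thesis"
  moreover have "\<sigma> \<in> K" "\<tau> \<in> K" using assms(1) order_in_K by simp_all
  ultimately have "(mu R \<tau>, mu R \<sigma>) \<in> R" using order_total mu_in_K assms(2,3) by blast
  then have "(\<tau>, \<sigma>) \<in> R" using hereditary \<open>\<sigma> \<in> K\<close> \<open>\<tau> \<in> K\<close> assms(2,3) by blast
  with assms(1) show False using order_asym by blast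
qed

lemma ext_vertex_of_mu:
  assumes u: "u \<in> ext_vertices \<rho>" and "\<rho> \<noteq> {}"
  shows "u \<in> ext_vertices (mu R \<rho>)"
proof -
  have u\<rho>: "u \<notin> \<rho>" "insert u \<rho> \<in> K" "mu R (insert u \<rho>) = \<rho>"
    using u unfolding ext_vertices_def by simp_all
  have "\<rho> \<in> K" by (rule face_in_K[OF u\<rho>(2)]) blast
  obtain x where x: "x \<in> \<rho>" "mu R \<rho> = \<rho> - {x}"
    using mu_facet[OF \<open>\<rho> \<in> K\<close> assms(2)] unfolding facets_def by blast
  have u_notin: "u \<notin> \<rho> - {x}" using u\<rho>(1) by simp
  have in_K: "insert u (\<rho> - {x}) \<in> K" by (rule face_in_K[OF u\<rho>(2)]) blast
  have "(\<rho> - {x}, t) \<in> R" if t: "t \<in> facets (insert u (\<rho> - {x}))" "t \<noteq> \<rho> - {x}" for t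
  proof -
    obtain z where z: "z \<in> insert u (\<rho> - {x})" "t = insert u (\<rho> - {x}) - {z}"
      using t(1) unfolding facets_def by blast
    have "z \<noteq> u" using z(2) t(2) u_notin by auto
    define G where "G = insert u (\<rho> - {z})"
    have "G \<in> facets (insert u \<rho>)"
      unfolding facets_def G_def using z(1) \<open>z \<noteq> u\<close> by auto
    moreover have "G \<noteq> \<rho>" using u\<rho>(1) by (auto simp: G_def)
    ultimately have \<rho>G: "(\<rho>, G) \<in> R" using mu_ge[OF u\<rho>(2)] u\<rho>(3) by auto
    have "t \<in> facets G"
      unfolding facets_def G_def using z x u\<rho>(1) \<open>z \<noteq> u\<close>
      by (intro CollectI exI[of _ x]) auto
    then have "mu R G = t \<or> (mu R G, t) \<in> R"
      using mu_ge order_in_K[OF \<rho>G] by blast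
    moreover have "\<rho> - {x} = mu R G \<or> (\<rho> - {x}, mu R G) \<in> R"
      using mu_mono[OF \<rho>G assms(2)] x(2) by (simp add: G_def)
    ultimately show ?thesis using t(2) order_trans by metis
  qed
  then have "mu R (insert u (\<rho> - {x})) = \<rho> - {x}"
    using mu_eqI[OF in_K] facets_insert[OF u_notin] unfolding greatest_in_def by blast
  with u_notin in_K show ?thesis
    unfolding ext_vertices_def x(2) by simp
qed

lemma cell_mu:
  assumes "\<rho> \<in> K" "\<rho> \<noteq> {}"
  shows "cell \<rho> \<subseteq> cell (mu R \<rho>)"
proof -
  obtain x where x: "x \<in> \<rho>" "mu R \<rho> = \<rho> - {x}"
    using mu_facet[OF assms] unfolding facets_def by blast
  have "x \<in> ext_vertices (mu R \<rho>)"
    unfolding ext_vertices_def using x assms(1) by (simp add: insert_absorb)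
  moreover have "ext_vertices \<rho> \<subseteq> ext_vertices (mu R \<rho>)"
    using ext_vertex_of_mu[OF _ assms(2)] by blast
  ultimately show ?thesis using x(1) unfolding cell_def x(2) by blast
qed

lemma greatest_face_in_cell:
  assumes "card \<rho> = k" "\<alpha> \<in> K" "\<alpha> \<in> cell \<rho>" "F \<subseteq> \<alpha>" "card F = k" "F \<noteq> \<rho>"
  shows "(\<rho>, F) \<in> R"
  using assms
proof (induction k arbitrary: \<rho> F)
  case 0
  then have "finite \<rho>" "finite F"
    using finite_simplex[OF 0(2)] finite_subset unfolding cell_def by auto
  then show ?case using 0 by simp
next
  case (Suc k)
  have "\<rho> \<subseteq> \<alpha>" using Suc.prems(3) unfolding cell_def by simp
  then have "\<rho> \<in> K" by (rule face_in_K[OF Suc.prems(2)])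
  have "F \<in> K" using Suc.prems(4) by (rule face_in_K[OF Suc.prems(2)])
  have "\<rho> \<noteq> {}" "F \<noteq> {}" using Suc.prems(1,5) by auto
  obtain x where x: "x \<in> \<rho>" "mu R \<rho> = \<rho> - {x}"
    using mu_facet[OF \<open>\<rho> \<in> K\<close> \<open>\<rho> \<noteq> {}\<close>] unfolding facets_def by blast
  obtain y where y: "y \<in> F" "mu R F = F - {y}"
    using mu_facet[OF \<open>F \<in> K\<close> \<open>F \<noteq> {}\<close>] unfolding facets_def by blast
  have fin: "finite \<rho>" "finite F" using \<open>\<rho> \<in> K\<close> \<open>F \<in> K\<close> finite_simplex by simp_all
  have "card (\<rho> - {x}) = k" using Suc.prems(1) x(1) fin(1) by simp
  moreover have "\<alpha> \<in> cell (\<rho> - {x})"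
    using subsetD[OF cell_mu[OF \<open>\<rho> \<in> K\<close> \<open>\<rho> \<noteq> {}\<close>] Suc.prems(3)] x(2) by simp
  ultimately have IH: "(\<rho> - {x}, F') \<in> R" if "F' \<subseteq> \<alpha>" "card F' = k" "F' \<noteq> \<rho> - {x}" for F'
    using Suc.IH[OF _ Suc.prems(2) _ that] by blast
  show ?case
  proof (cases "F - {y} = \<rho> - {x}")
    case False
    moreover have "card (F - {y}) = k" "F - {y} \<subseteq> \<alpha>" using Suc.prems(4,5) y(1) fin(2) by auto
    ultimately have "(mu R \<rho>, mu R F) \<in> R" using IH x(2) y(2) by simp
    then show ?thesis
      using hereditary \<open>\<rho> \<in> K\<close> \<open>F \<in> K\<close> \<open>\<rho> \<noteq> {}\<close> \<open>F \<noteq> {}\<close> by blast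
  next
    case True
    then have F: "F = insert y (\<rho> - {x})" using y(1) by blast
    then have "y \<noteq> x" using Suc.prems(6) x(1) by (auto simp: insert_absorb)
    then have "y \<notin> \<rho>" using True y(1) by blast
    then have "y \<in> ext_vertices \<rho>" using Suc.prems(3,4) y(1) unfolding cell_def by blast
    then have "insert y \<rho> \<in> K" "mu R (insert y \<rho>) = \<rho>"
      unfolding ext_vertices_def by simp_all
    moreover have "F \<in> facets (insert y \<rho>)"
      unfolding facets_def F using x(1) \<open>y \<noteq> x\<close>
      by (intro CollectI exI[of _ x]) auto
    ultimately show ?thesis using mu_ge Suc.prems(6) by metis
  qed
qed

end

locale mu_joinable_complex = hereditary_complex +
  fixes r :: nat
  assumes flag: "flag_complex K"
    and r_pos: "0 < r"
    and joinable: "\<And>\<sigma> \<tau>. \<sigma> \<in> K \<Longrightarrow> \<tau> \<in> K \<Longrightarrow> dim \<sigma> = int r \<Longrightarrow> dim \<tau> = int r \<Longrightarrow>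
      mu R \<sigma> = mu R \<tau> \<Longrightarrow> \<sigma> \<union> \<tau> \<in> K"
begin

lemma ext_vertices_union_in_K:
  assumes "\<rho> \<in> K" "card \<rho> = r"
  shows "\<rho> \<union> ext_vertices \<rho> \<in> K"
proof -
  have insert_in_K: "insert v \<rho> \<in> K" if "v \<in> \<rho> \<union> ext_vertices \<rho>" for v
    using that assms(1) unfolding ext_vertices_def by (auto simp: insert_absorb)
  have join: "insert v \<rho> \<union> insert w \<rho> \<in> K" if "v \<in> \<rho> \<union> ext_vertices \<rho>" "w \<in> \<rho> \<union> ext_vertices \<rho>" for v w
  proof (cases "v \<in> \<rho> \<or> w \<in> \<rho>")
    case True
    then show ?thesis using insert_in_K that assms(1) by (auto simp: insert_absorb)
  next
    case False
    with that have "v \<in> ext_vertices \<rho>" "w \<in> ext_vertices \<rho>" by simp_all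
    then have "insert v \<rho> \<in> K" "insert w \<rho> \<in> K" "mu R (insert v \<rho>) = mu R (insert w \<rho>)"
      unfolding ext_vertices_def by simp_all
    moreover have "dim (insert v \<rho>) = int r" "dim (insert w \<rho>) = int r"
      using False assms(2) finite_simplex[OF assms(1)] by (simp_all add: dim_def)
    ultimately show ?thesis using joinable by presburger
  qed
  have edges: "{v, w} \<in> K" if "v \<in> \<rho> \<union> ext_vertices \<rho>" "w \<in> \<rho> \<union> ext_vertices \<rho>" for v w
    using join[OF that] by (rule face_in_K) blast
  have "\<rho> \<union> ext_vertices \<rho> \<subseteq> \<Union>K"
    using assms(1) insert_in_K by blast
  moreover from this have "finite (\<rho> \<union> ext_vertices \<rho>)"
    using finite_vertices finite_subset by blast
  moreover have "\<forall>S. finite S \<longrightarrow> S \<subseteq> \<Union>K \<longrightarrow> (\<forall>v\<in>S. \<forall>w\<in>S. v \<noteq> w \<longrightarrow> {v, w} \<in> K) \<longrightarrow> S \<in> K"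
    using flag unfolding flag_complex_def by simp
  ultimately show ?thesis using edges by simp
qed

lemma cell_subset_K:
  assumes "\<rho> \<in> K" "card \<rho> = r" "\<alpha> \<in> cell \<rho>"
  shows "\<alpha> \<in> K"
  using face_in_K[OF ext_vertices_union_in_K[OF assms(1,2)]] assms(3) unfolding cell_def by simp

definition top_face :: "'a set \<Rightarrow> 'a set" where
  "top_face \<alpha> = (THE \<rho>. greatest_in R {\<rho>. \<rho> \<subseteq> \<alpha> \<and> card \<rho> = r} \<rho>)"

lemma r_faces_subset_K: "\<alpha> \<in> K \<Longrightarrow> {\<rho>. \<rho> \<subseteq> \<alpha> \<and> card \<rho> = r} \<subseteq> K"
  using face_in_K by auto

lemma top_face_eqI:
  "\<alpha> \<in> K \<Longrightarrow> greatest_in R {\<rho>. \<rho> \<subseteq> \<alpha> \<and> card \<rho> = r} \<rho> \<Longrightarrow> top_face \<alpha> = \<rho>"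
  unfolding top_face_def using greatest_in_The[OF linear_order r_faces_subset_K] by blast

lemma top_face_greatest:
  assumes "\<alpha> \<in> K" "r \<le> card \<alpha>"
  shows "greatest_in R {\<rho>. \<rho> \<subseteq> \<alpha> \<and> card \<rho> = r} (top_face \<alpha>)"
proof -
  have "finite {\<rho>. \<rho> \<subseteq> \<alpha> \<and> card \<rho> = r}"
    using finite_simplex[OF assms(1)] by simp
  moreover have "{\<rho>. \<rho> \<subseteq> \<alpha> \<and> card \<rho> = r} \<noteq> {}"
    using obtain_subset_with_card_n[OF assms(2)] by blast
  ultimately obtain \<rho> where "greatest_in R {\<rho>. \<rho> \<subseteq> \<alpha> \<and> card \<rho> = r} \<rho>"
    using greatest_in_exists[OF linear_order] r_faces_subset_K[OF assms(1)] by blast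
  then show ?thesis using top_face_eqI[OF assms(1)] by simp
qed

lemma top_face_cell:
  assumes "\<rho> \<in> K" "card \<rho> = r" "\<alpha> \<in> cell \<rho>"
  shows "top_face \<alpha> = \<rho>"
proof (rule top_face_eqI)
  show "\<alpha> \<in> K" using cell_subset_K assms by blast
  have "(\<rho>, F) \<in> R" if "F \<subseteq> \<alpha>" "card F = r" "F \<noteq> \<rho>" for F
    using greatest_face_in_cell[OF assms(2) \<open>\<alpha> \<in> K\<close> assms(3) that] .
  with assms(2,3) show "greatest_in R {\<rho>. \<rho> \<subseteq> \<alpha> \<and> card \<rho> = r} \<rho>"
    unfolding greatest_in_def cell_def by blast
qed

lemma cell_top_face:
  assumes "\<alpha> \<in> K" "r \<le> card \<alpha>"
  shows "\<alpha> \<in> cell (top_face \<alpha>)"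
proof -
  define \<rho> where "\<rho> = top_face \<alpha>"
  have \<rho>: "greatest_in R {\<rho>. \<rho> \<subseteq> \<alpha> \<and> card \<rho> = r} \<rho>"
    using top_face_greatest[OF assms] \<rho>_def by simp
  have "u \<in> ext_vertices \<rho>" if u: "u \<in> \<alpha>" "u \<notin> \<rho>" for u
  proof -
    have sub: "insert u \<rho> \<subseteq> \<alpha>" using \<rho> u(1) unfolding greatest_in_def by blast
    then have in_K: "insert u \<rho> \<in> K" by (rule face_in_K[OF assms(1)])
    have "card \<rho> = r" "finite \<rho>"
      using \<rho> finite_simplex[OF in_K] unfolding greatest_in_def by simp_all
    have "(\<rho>, t) \<in> R" if t: "t \<in> facets (insert u \<rho>)" "t \<noteq> \<rho>" for t
    proof -
      obtain z where z: "z \<in> insert u \<rho>" "t = insert u \<rho> - {z}"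
        using t(1) unfolding facets_def by blast
      have "card (insert u \<rho>) = Suc r" using \<open>card \<rho> = r\<close> \<open>finite \<rho>\<close> u(2) by simp
      then have "card t = r" using z \<open>finite \<rho>\<close> by simp
      moreover have "t \<subseteq> \<alpha>" using sub z(2) by blast
      ultimately show ?thesis using \<rho> t(2) unfolding greatest_in_def by blast
    qed
    then have "mu R (insert u \<rho>) = \<rho>"
      using mu_eqI[OF in_K] facets_insert[OF u(2)] unfolding greatest_in_def by blast
    with u(2) in_K show ?thesis unfolding ext_vertices_def by simp
  qed
  moreover have "\<rho> \<subseteq> \<alpha>" using \<rho> unfolding greatest_in_def by blast
  ultimately show ?thesis unfolding cell_def \<rho>_def[symmetric] by blast
qed

definition pivotal :: "'a set \<Rightarrow> bool" where
  "pivotal \<rho> \<longleftrightarrow> \<rho> \<in> K \<and> card \<rho> = r \<and> ext_vertices \<rho> \<noteq> {}"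

definition pivot :: "'a set \<Rightarrow> 'a" where
  "pivot \<rho> = (SOME u. u \<in> ext_vertices \<rho>)"

definition matching :: "('a set \<times> 'a set) set" where
  "matching = {(insert (pivot \<rho>) \<beta>, \<beta>) | \<rho> \<beta>. pivotal \<rho> \<and> \<beta> \<in> cell \<rho> \<and> pivot \<rho> \<notin> \<beta>}"

definition matched :: "'a set set" where
  "matched = (\<Union>q\<in>matching. {fst q, snd q})"

definition matching_pair :: "'a set \<Rightarrow> 'a set \<times> 'a set" where
  "matching_pair \<alpha> = (if pivot (top_face \<alpha>) \<in> \<alpha> then (\<alpha>, \<alpha> - {pivot (top_face \<alpha>)})
     else (insert (pivot (top_face \<alpha>)) \<alpha>, \<alpha>))"

lemma pivot_ext_vertex: "pivotal \<rho> \<Longrightarrow> pivot \<rho> \<in> ext_vertices \<rho>"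
  unfolding pivotal_def pivot_def by (simp add: some_in_eq)

lemma pivot_notin: "pivotal \<rho> \<Longrightarrow> pivot \<rho> \<notin> \<rho>"
  using pivot_ext_vertex unfolding ext_vertices_def by blast

lemma matchingE:
  assumes "q \<in> matching"
  obtains \<rho> \<beta> where "q = (insert (pivot \<rho>) \<beta>, \<beta>)" "pivotal \<rho>" "\<beta> \<in> cell \<rho>" "pivot \<rho> \<notin> \<beta>"
  using assms unfolding matching_def by blast

lemma matching_pair_in_cell:
  assumes "q \<in> matching" "\<alpha> \<in> {fst q, snd q}"
  obtains \<rho> where "pivotal \<rho>" "\<alpha> \<in> cell \<rho>" "snd q \<in> cell \<rho>" "top_face \<alpha> = \<rho>"
    "q = matching_pair \<alpha>"
proof -
  obtain \<rho> \<beta> where q: "q = (insert (pivot \<rho>) \<beta>, \<beta>)" "pivotal \<rho>" "\<beta> \<in> cell \<rho>" "pivot \<rho> \<notin> \<beta>"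
    using assms(1) by (rule matchingE)
  have "\<alpha> \<in> cell \<rho>" using assms(2) q pivot_ext_vertex unfolding cell_def by auto
  moreover from this have "top_face \<alpha> = \<rho>"
    using top_face_cell q(2) unfolding pivotal_def by blast
  moreover have "q = matching_pair \<alpha>"
    using assms(2) q \<open>top_face \<alpha> = \<rho>\<close> by (auto simp: matching_pair_def)
  moreover have "snd q \<in> cell \<rho>" using q(1,3) by simp
  ultimately show ?thesis using that q(2) by blast
qed

lemma matching_pair_in_matching:
  assumes "pivotal \<rho>" "\<alpha> \<in> cell \<rho>"
  shows "matching_pair \<alpha> \<in> matching" "\<alpha> \<in> {fst (matching_pair \<alpha>), snd (matching_pair \<alpha>)}"
proof -
  have top: "top_face \<alpha> = \<rho>" using top_face_cell assms unfolding pivotal_def by blast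
  show "matching_pair \<alpha> \<in> matching"
  proof (cases "pivot \<rho> \<in> \<alpha>")
    case True
    moreover have "\<alpha> - {pivot \<rho>} \<in> cell \<rho>"
      using assms pivot_notin unfolding cell_def by blast
    ultimately show ?thesis
      unfolding matching_pair_def matching_def top using assms(1) insert_Diff by fastforce
  next
    case False
    then show ?thesis unfolding matching_pair_def matching_def top using assms by auto
  qed
  show "\<alpha> \<in> {fst (matching_pair \<alpha>), snd (matching_pair \<alpha>)}"
    unfolding matching_pair_def by simp
qed

lemma matched_in_K:
  assumes "\<alpha> \<in> matched"
  shows "\<alpha> \<in> K" "r \<le> card \<alpha>"
proof -
  obtain q where "q \<in> matching" "\<alpha> \<in> {fst q, snd q}"
    using assms unfolding matched_def by blast
  then obtain \<rho> where "pivotal \<rho>" "\<alpha> \<in> cell \<rho>"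
    by (rule matching_pair_in_cell)
  then have \<rho>: "\<rho> \<in> K" "card \<rho> = r" "\<rho> \<subseteq> \<alpha>" unfolding pivotal_def cell_def by simp_all
  then show "\<alpha> \<in> K" using cell_subset_K \<open>\<alpha> \<in> cell \<rho>\<close> by blast
  then show "r \<le> card \<alpha>" using \<rho> card_mono finite_simplex by metis
qed

lemma matched_if_card_gt:
  assumes "\<alpha> \<in> K" "r < card \<alpha>"
  shows "\<alpha> \<in> matched"
proof -
  define \<rho> where "\<rho> = top_face \<alpha>"
  have cell: "\<alpha> \<in> cell \<rho>" using cell_top_face assms \<rho>_def by simp
  have "\<rho> \<in> K" "card \<rho> = r" "\<rho> \<subseteq> \<alpha>"
    using top_face_greatest[of \<alpha>] assms face_in_K unfolding \<rho>_def greatest_in_def by auto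
  then have "\<rho> \<noteq> \<alpha>" using assms(2) by blast
  then have "ext_vertices \<rho> \<noteq> {}" using cell \<open>\<rho> \<subseteq> \<alpha>\<close> unfolding cell_def by blast
  then have "pivotal \<rho>" using \<open>\<rho> \<in> K\<close> \<open>card \<rho> = r\<close> unfolding pivotal_def by simp
  then show ?thesis
    using matching_pair_in_matching[OF _ cell] unfolding matched_def by blast
qed

lemma unmatched_card_le: "\<sigma> \<in> K - matched \<Longrightarrow> card \<sigma> \<le> r"
  using matched_if_card_gt by fastforce

lemma unmatched_subcomplex: "simplicial_complex (K - matched)"
  unfolding simplicial_complex_def
proof (intro conjI ballI allI impI)
  show "finite (K - matched)" using finite_complex by simp
  show "finite \<sigma>" if "\<sigma> \<in> K - matched" for \<sigma> using that finite_simplex by simp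
  show "{} \<in> K - matched"
    using complex matched_in_K(2)[of "{}"] r_pos unfolding simplicial_complex_def by auto
  show "\<tau> \<in> K - matched" if "\<sigma> \<in> K - matched" "\<tau> \<subseteq> \<sigma>" for \<sigma> \<tau>
  proof -
    have "\<tau> \<in> K" using that face_in_K by blast
    moreover have "\<tau> \<notin> matched"
    proof
      assume "\<tau> \<in> matched"
      have "finite \<sigma>" using that(1) finite_simplex by simp
      have "r \<le> card \<tau>" using \<open>\<tau> \<in> matched\<close> by (rule matched_in_K)
      moreover have "card \<tau> \<le> card \<sigma>" using card_mono[OF \<open>finite \<sigma>\<close> that(2)] .
      moreover have "card \<sigma> \<le> r" using unmatched_card_le that(1) .
      ultimately have "\<tau> = \<sigma>" using card_subset_eq[OF \<open>finite \<sigma>\<close> that(2)] by simp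
      with \<open>\<tau> \<in> matched\<close> that(1) show False by simp
    qed
    ultimately show ?thesis by blast
  qed
qed

lemma finite_matching: "finite matching"
proof (rule finite_subset)
  show "matching \<subseteq> K \<times> K"
    using matched_in_K(1) unfolding matched_def by fastforce
  show "finite (K \<times> K)" using finite_complex by simp
qed

lemma matching_facet:
  assumes "q \<in> matching"
  shows "snd q \<in> facets (fst q)" "snd q \<noteq> {}"
proof -
  obtain \<rho> \<beta> where q: "q = (insert (pivot \<rho>) \<beta>, \<beta>)" "pivotal \<rho>" "\<beta> \<in> cell \<rho>" "pivot \<rho> \<notin> \<beta>"
    using assms by (rule matchingE)
  show "snd q \<in> facets (fst q)" using q(1,4) facets_insert by simp
  have "\<rho> \<noteq> {}" using q(2) r_pos unfolding pivotal_def by auto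
  then show "snd q \<noteq> {}" using q(1,3) unfolding cell_def by auto
qed

lemma matching_disjoint: "disjoint_family_on (\<lambda>q. {fst q, snd q}) matching"
  unfolding disjoint_family_on_def
proof (intro ballI impI)
  fix q q' assume "q \<in> matching" "q' \<in> matching" "q \<noteq> q'"
  show "{fst q, snd q} \<inter> {fst q', snd q'} = {}"
  proof (rule ccontr)
    assume "{fst q, snd q} \<inter> {fst q', snd q'} \<noteq> {}"
    then obtain \<alpha> where "\<alpha> \<in> {fst q, snd q}" "\<alpha> \<in> {fst q', snd q'}" by blast
    then have "q = matching_pair \<alpha>" "q' = matching_pair \<alpha>"
      using matching_pair_in_cell \<open>q \<in> matching\<close> \<open>q' \<in> matching\<close> by metis+
    with \<open>q \<noteq> q'\<close> show False by simp
  qed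
qed

lemma fst_matching_pair_psupset:
  assumes "\<beta> \<subset> \<gamma>" "insert (pivot (top_face \<gamma>)) \<beta> \<noteq> \<gamma>"
  shows "insert (pivot (top_face \<gamma>)) \<beta> \<subset> fst (matching_pair \<gamma>)"
proof -
  define u where "u = pivot (top_face \<gamma>)"
  have sup: "u \<in> fst (matching_pair \<gamma>)" "\<gamma> \<subseteq> fst (matching_pair \<gamma>)"
    unfolding matching_pair_def u_def by auto
  moreover have "insert u \<beta> \<noteq> fst (matching_pair \<gamma>)"
  proof
    assume eq: "insert u \<beta> = fst (matching_pair \<gamma>)"
    obtain x where x: "x \<in> \<gamma>" "x \<notin> \<beta>" using assms(1) by blast
    then have "x = u" using eq sup(2) by auto
    then have "insert u \<beta> \<subseteq> \<gamma>" using assms(1) x by auto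
    moreover have "\<gamma> \<subseteq> insert u \<beta>" using eq sup(2) by simp
    ultimately show False using assms(2) u_def by blast
  qed
  ultimately show ?thesis using assms(1) u_def by auto
qed

(* Compared lexicographically (HOL-Library.Product_Lexorder). *)
definition weight :: "'a set \<times> 'a set \<Rightarrow> nat \<times> nat" where
  "weight q = (rank (top_face (snd q)), card (fst q))"

lemma matching_acyclic:
  assumes "q \<in> matching" "\<gamma> \<in> K" "snd q \<subset> \<gamma>" "\<gamma> \<noteq> fst q"
  shows "\<exists>q'\<in>matching. \<gamma> \<in> {fst q', snd q'} \<and> weight q < weight q'"
proof -
  obtain \<rho> \<beta> where q: "q = (insert (pivot \<rho>) \<beta>, \<beta>)" "pivotal \<rho>" "\<beta> \<in> cell \<rho>" "pivot \<rho> \<notin> \<beta>"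
    using assms(1) by (rule matchingE)
  have \<rho>: "\<rho> \<in> K" "card \<rho> = r" "\<rho> \<subseteq> \<beta>"
    using q(2,3) unfolding pivotal_def cell_def by simp_all
  have \<beta>\<gamma>: "\<beta> \<subset> \<gamma>" using assms(3) q(1) by simp
  have "finite \<gamma>" using assms(2) finite_simplex by simp
  then have "r < card \<gamma>"
    using \<rho> \<beta>\<gamma> card_mono psubset_card_mono finite_subset
    by (metis le_less_trans less_imp_le)
  then have "\<gamma> \<in> matched" using matched_if_card_gt assms(2) by simp
  then obtain q' where q': "q' \<in> matching" "\<gamma> \<in> {fst q', snd q'}"
    unfolding matched_def by blast
  then obtain \<rho>' where \<rho>': "pivotal \<rho>'" "snd q' \<in> cell \<rho>'" "top_face \<gamma> = \<rho>'"
    "q' = matching_pair \<gamma>"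
    by (rule matching_pair_in_cell)
  have weight_q: "weight q = (rank \<rho>, card (fst q))"
    using top_face_cell[OF \<rho>(1,2) q(3)] q(1) unfolding weight_def by simp
  have "\<rho>' \<in> K" "card \<rho>' = r" using \<rho>'(1) unfolding pivotal_def by simp_all
  then have weight_q': "weight q' = (rank \<rho>', card (fst q'))"
    using top_face_cell \<rho>'(2) unfolding weight_def by simp
  have "greatest_in R {F. F \<subseteq> \<gamma> \<and> card F = r} \<rho>'"
    using top_face_greatest[OF assms(2)] \<open>r < card \<gamma>\<close> \<rho>'(3) by simp
  then have "\<rho>' = \<rho> \<or> (\<rho>', \<rho>) \<in> R"
    using \<rho> \<beta>\<gamma> unfolding greatest_in_def by blast
  then have "weight q < weight q'"
  proof
    assume "\<rho>' = \<rho>"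
    then have "fst q \<subset> fst q'"
      using fst_matching_pair_psupset[OF \<beta>\<gamma>] q(1) assms(4) \<rho>'(3,4) by simp
    moreover have "finite (fst q')"
      using q'(1) matched_in_K(1) finite_simplex unfolding matched_def by blast
    ultimately show ?thesis
      using weight_q weight_q' \<open>\<rho>' = \<rho>\<close> psubset_card_mono by (simp add: less_prod_def)
  next
    assume "(\<rho>', \<rho>) \<in> R"
    then show ?thesis using weight_q weight_q' rank_less by (simp add: less_prod_def)
  qed
  with q' show ?thesis by blast
qed

lemma collapses_below_r:
  "\<exists>L. collapses_on K L \<and> simplicial_complex L \<and> L \<subseteq> K \<and> (\<forall>\<sigma>\<in>L. dim \<sigma> < int r)"
proof (intro exI conjI ballI)
  show "collapses_on K (K - matched)"
  proof -
    have "K - (K - matched) = (\<Union>q\<in>matching. {fst q, snd q})"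
      using matched_in_K(1) unfolding matched_def by blast
    from collapses_on_acyclic_matching[OF finite_matching complex Diff_subset this
        matching_disjoint matching_facet matching_acyclic]
    show ?thesis .
  qed
  show "simplicial_complex (K - matched)" by (rule unmatched_subcomplex)
  show "K - matched \<subseteq> K" by blast
  show "dim \<sigma> < int r" if "\<sigma> \<in> K - matched" for \<sigma>
    using unmatched_card_le[OF that] unfolding dim_def by simp
qed

end

theorem proposition1:
  fixes K :: "'a set set" and R :: "('a set \<times> 'a set) set" and r :: nat
  assumes "flag_complex K"
    and "hereditary_ordering K R"
    and "r > 0"
    and "\<forall>\<sigma>\<in>K. \<forall>\<tau>\<in>K. dim \<sigma> = int r \<longrightarrow> dim \<tau> = int r \<longrightarrow> mu R \<sigma> = mu R \<tau> \<longrightarrow> \<sigma> \<union> \<tau> \<in> K"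
  shows "\<exists>L. collapses_on K L \<and> simplicial_complex L \<and> L \<subseteq> K \<and> (\<forall>\<sigma>\<in>L. dim \<sigma> < int r)"
proof -
  interpret mu_joinable_complex K R r
  proof unfold_locales
    show "simplicial_complex K" using assms(1) unfolding flag_complex_def by blast
    show "strict_total_ordering K R" using assms(2) unfolding hereditary_ordering_def by blast
    show "(\<sigma>, \<tau>) \<in> R"
      if "\<sigma> \<in> K" "\<tau> \<in> K" "\<sigma> \<noteq> {}" "\<tau> \<noteq> {}" "(mu R \<sigma>, mu R \<tau>) \<in> R" for \<sigma> \<tau>
      using assms(2) that unfolding hereditary_ordering_def by blast
    show "\<sigma> \<union> \<tau> \<in> K"
      if "\<sigma> \<in> K" "\<tau> \<in> K" "dim \<sigma> = int r" "dim \<tau> = int r" "mu R \<sigma> = mu R \<tau>" for \<sigma> \<tau>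
      using assms(4) that by blast
  qed (fact assms(1,3))+
  show ?thesis by (rule collapses_below_r)
qed

end
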